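(* Let $R>0$ and $\Omega=\{z\in\mathbb{C}:|z|<R\}\setminus(-R,-1]$. Let $K\subset\Omega$ be a compact set such that $\Omega\setminus K$ is a domain regular for the Dirichlet problem. Let $\{K_\delta\}_{\delta\in(0,1]}$ be a family of compact subsets of $\Omega\setminus K$ such that (i) $K_\delta\subset K_{\delta'}$ if and only if $\delta\le\delta'$, and (ii) $K^*:=\bigcap_{\delta\in(0,1]}K_\delta$ is a finite set. For $\delta\in(0,1]$ let $\Omega_\delta=\Omega\setminus(K\cup K_\delta)$ and $\omega_\delta(z)=\omega(z,C_R,\Omega_\delta)$, $z\in\Omega_\delta$, where $C_R=\{|z|=R\}$. Then for every $z\in\Omega^*:=\Omega\setminus(K\cup K^* )$, $$\lim_{\delta\to0^+}\omega_\delta(z)=\omega(z,C_R,\Omega\setminus K).$$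
   Context: $\omega(z,E,U)$ denotes the harmonic measure of a Borel set $E\subset\partial U$ with respect to $U$ evaluated at $z$ (the solution of the generalized Dirichlet problem with boundary data $\chi_E$); when $U$ is only an open set, one uses the component of $U$ containing $z$. *)

theory Defs
  imports "HOL-Analysis.Analysis"
begin

text \<open>Subharmonic functions in the Perron family are
  taken real-valued (for bounded boundary data this gives the same Perron solution,
  since max(u, -M) is again subharmonic).\<close>

definition usc_on :: "complex set \<Rightarrow> (complex \<Rightarrow> real) \<Rightarrow> bool" where
  "usc_on U u \<longleftrightarrow> (\<forall>z\<in>U. \<forall>c. u z < c \<longrightarrow> eventually (\<lambda>y. u y < c) (at z within U))"

definition subharmonic_on :: "complex set \<Rightarrow> (complex \<Rightarrow> real) \<Rightarrow> bool" where
  "subharmonic_on U u \<longleftrightarrow> open U \<and> usc_on U u \<and>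
     (\<forall>z\<in>U. \<exists>r0>0. cball z r0 \<subseteq> U \<and>
        (\<forall>r. 0 < r \<and> r < r0 \<longrightarrow>
           set_integrable lborel {0..2*pi} (\<lambda>t. u (z + of_real r * cis t)) \<and>
           u z \<le> (1 / (2*pi)) * (LINT t:{0..2*pi}|lborel. u (z + of_real r * cis t))))"

definition perron_family :: "complex set \<Rightarrow> (complex \<Rightarrow> real) \<Rightarrow> (complex \<Rightarrow> real) set" where
  "perron_family U f = {u. subharmonic_on U u \<and>
     (\<forall>\<zeta>\<in>frontier U. Limsup (at \<zeta> within U) (\<lambda>z. ereal (u z)) \<le> ereal (f \<zeta>))}"

definition perron :: "complex set \<Rightarrow> (complex \<Rightarrow> real) \<Rightarrow> complex \<Rightarrow> real" where
  "perron U f z = real_of_ereal (SUP u\<in>perron_family U f. ereal (u z))"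

definition dirichlet_regular_domain :: "complex set \<Rightarrow> bool" where
  "dirichlet_regular_domain U \<longleftrightarrow> open U \<and> connected U \<and> U \<noteq> {} \<and>
     (\<forall>f. continuous_on (frontier U) f \<longrightarrow>
        (\<forall>\<zeta>\<in>frontier U. (perron U f \<longlongrightarrow> f \<zeta>) (at \<zeta> within U)))"

definition harmonic_measure :: "complex \<Rightarrow> complex set \<Rightarrow> complex set \<Rightarrow> real" where
  "harmonic_measure z E U = perron (connected_component_set U z) (indicator E) z"

end

(*
  Domain monotonicity of Perron solutions yields the upper bound: the positive part of a
  Perron subfunction of Omega_delta, extended by zero, is a Perron subfunction of Omega - K,
  because the data vanish on the new boundary pieces K_delta.

  For the lower bound take a Perron subfunction u of Omega - K with u(z) close to the harmonic
  measure and subtract the barrier h = (1/L) * sum_{p in K*} ln (D / |w - p|), where D bounds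
  all distances. It is harmonic and nonnegative off the finite set K*, exceeds 1 within
  distance D e^(-L) of K*, and h(z) is small once L is large. By compactness of the decreasing
  family, K_delta eventually lies in that neighbourhood of K*; there u <= 1 < h, so u - h is a
  Perron subfunction of Omega_delta and omega_delta(z) >= u(z) - h(z).
*)

theory Submission
  imports Defs "HOL-Complex_Analysis.Complex_Analysis"
begin

lemma set_integrable_bounded_Icc:
  fixes g :: "real \<Rightarrow> real"
  assumes "g \<in> borel_measurable lborel" "\<And>t. \<bar>g t\<bar> \<le> B"
  shows "set_integrable lborel {a..b} g"
  unfolding set_integrable_def
  by (rule integrableI_bounded_set_indicator[where B=B])
     (use assms emeasure_bounded_finite[OF bounded_closed_interval] in auto)

lemma set_integral_le_of_le_on_subinterval:
  fixes g :: "real \<Rightarrow> real"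
  assumes int: "set_integrable lborel {a..b} g"
    and J: "a \<le> s" "0 \<le> l" "s + l \<le> b"
    and le: "\<And>t. t \<in> {a..b} \<Longrightarrow> g t \<le> m" and le_J: "\<And>t. t \<in> {s..s+l} \<Longrightarrow> g t \<le> c"
  shows "(LINT t:{a..b}|lborel. g t) \<le> (b - a) * m - (m - c) * l"
proof -
  define k where "k = (\<lambda>t. m - (m - c) * indicator {s..s+l} t)"
  have const_int: "set_integrable lborel {a..b} (\<lambda>t. m)"
    by (rule set_integrable_bounded_Icc[where B="\<bar>m\<bar>"]) auto
  have J_int: "set_integrable lborel {a..b} (\<lambda>t. (m - c) * indicator {s..s+l} t)"
    by (rule set_integrable_bounded_Icc[where B="\<bar>m - c\<bar>"]) (auto simp: indicator_def)
  have "(LINT t:{a..b}|lborel. (indicator {s..s+l} t :: real)) = (\<integral>t. indicator {s..s+l} t \<partial>lborel)"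
    unfolding set_lebesgue_integral_def using J
    by (intro Bochner_Integration.integral_cong) (auto simp: indicator_def)
  also have "\<dots> = l" using J(2) by simp
  finally have k_int: "(LINT t:{a..b}|lborel. k t) = (b - a) * m - (m - c) * l"
    unfolding k_def using set_integral_diff(2)[OF const_int J_int] J by (simp add: set_integral_const)
  have "(LINT t:{a..b}|lborel. g t) \<le> (LINT t:{a..b}|lborel. k t)"
  proof (rule set_integral_mono[OF int])
    show "set_integrable lborel {a..b} k" unfolding k_def using const_int J_int by simp
    show "g t \<le> k t" if "t \<in> {a..b}" for t
      using le[OF that] le_J[of t] by (cases "t \<in> {s..s+l}") (simp_all add: k_def)
  qed
  then show ?thesis using k_int by simp
qed

lemma set_integral_Icc_eq_has_integral:
  fixes g :: "real \<Rightarrow> real"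
  assumes "continuous_on {a..b} g" "(g has_integral I) {a..b}"
  shows "set_integrable lborel {a..b} g" "(LINT t:{a..b}|lborel. g t) = I"
proof -
  show int: "set_integrable lborel {a..b} g" by (rule borel_integrable_atLeastAtMost'[OF assms(1)])
  show "(LINT t:{a..b}|lborel. g t) = I"
    using set_borel_integral_eq_integral(2)[OF int] assms(2) by (simp add: integral_unique)
qed

section \<open>Upper semicontinuous functions\<close>

lemma usc_onD_dist:
  assumes "usc_on U u" "x \<in> U" "u x < c"
  obtains d where "d > 0" "\<And>y. y \<in> U \<Longrightarrow> dist y x < d \<Longrightarrow> u y < c"
proof -
  have "eventually (\<lambda>y. u y < c) (at x within U)"
    using assms unfolding usc_on_def by blast
  then obtain d where "d > 0" "\<forall>y\<in>U. y \<noteq> x \<and> dist y x < d \<longrightarrow> u y < c"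
    unfolding eventually_at by blast
  with assms(3) show thesis by (metis that)
qed

lemma usc_on_circle_measurable:
  assumes "usc_on U u" "\<And>t. x + of_real r * cis t \<in> U"
  shows "(\<lambda>t. u (x + of_real r * cis t)) \<in> borel_measurable lborel"
proof (subst borel_measurable_iff_less, intro allI)
  fix a
  let ?g = "\<lambda>t. u (x + of_real r * cis t)"
  have "open {t. ?g t < a}"
  proof (subst open_dist, intro ballI)
    fix t assume "t \<in> {t. ?g t < a}"
    then obtain d where d: "d > 0" "\<And>y. y \<in> U \<Longrightarrow> dist y (x + of_real r * cis t) < d \<Longrightarrow> u y < a"
      using usc_onD_dist[OF assms(1) assms(2)[of t]] by auto
    have "isCont (\<lambda>s. x + of_real r * cis s) t" unfolding cis_conv_exp by (intro continuous_intros)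
    then obtain e where "e > 0"
      "\<forall>s. dist s t < e \<longrightarrow> dist (x + of_real r * cis s) (x + of_real r * cis t) < d"
      using d(1) unfolding continuous_at_eps_delta by blast
    then show "\<exists>e>0. \<forall>s. dist s t < e \<longrightarrow> s \<in> {t. ?g t < a}"
      using d assms(2) by auto
  qed
  then show "{t \<in> space lborel. ?g t < a} \<in> sets lborel" by auto
qed

lemma set_integrable_usc_on_circle:
  assumes "usc_on U u" "\<And>t. x + of_real r * cis t \<in> U" "\<And>y. y \<in> U \<Longrightarrow> \<bar>u y\<bar> \<le> B"
  shows "set_integrable lborel {0..2*pi} (\<lambda>t. u (x + of_real r * cis t))"
  by (rule set_integrable_bounded_Icc[OF usc_on_circle_measurable[OF assms(1,2)]])
     (use assms(2,3) in blast)

lemma usc_on_circle_mean_nonneg: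
  assumes usc: "usc_on U w" and w: "\<And>y. 0 \<le> w y" "\<And>y. w y \<le> B" and r: "0 < r" "cball z r \<subseteq> U"
  shows "set_integrable lborel {0..2*pi} (\<lambda>t. w (z + of_real r * cis t))"
    and "0 \<le> (1 / (2*pi)) * (LINT t:{0..2*pi}|lborel. w (z + of_real r * cis t))"
proof -
  have "z + of_real r * cis t \<in> U" for t using r by (auto simp: dist_norm norm_mult)
  then show int: "set_integrable lborel {0..2*pi} (\<lambda>t. w (z + of_real r * cis t))"
    using w by (intro set_integrable_usc_on_circle[OF usc, where B=B]) (auto simp: abs_le_iff)
  have "(LINT t:{0..2*pi}|lborel. (0::real)) \<le> (LINT t:{0..2*pi}|lborel. w (z + of_real r * cis t))"
    by (rule set_integral_mono[OF _ int]) (auto simp: set_integrable_def w(1))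
  then show "0 \<le> (1 / (2*pi)) * (LINT t:{0..2*pi}|lborel. w (z + of_real r * cis t))" by simp
qed

lemma usc_on_attains_max:
  assumes "compact S" "S \<noteq> {}" "usc_on S u"
  obtains x where "x \<in> S" "\<And>y. y \<in> S \<Longrightarrow> u y \<le> u x"
proof -
  have "openin (top_of_set S) {y \<in> S. u y < c}" for c
    unfolding openin_euclidean_subtopology_iff
  proof (intro conjI ballI)
    fix x assume "x \<in> {y \<in> S. u y < c}"
    then obtain d where "d > 0" "\<And>y. y \<in> S \<Longrightarrow> dist y x < d \<Longrightarrow> u y < c"
      using usc_onD_dist[OF assms(3)] by blast
    then show "\<exists>e>0. \<forall>y\<in>S. dist y x < e \<longrightarrow> y \<in> {y \<in> S. u y < c}" by blast
  qed auto
  then have "\<forall>c. \<exists>T. open T \<and> {y \<in> S. u y < c} = S \<inter> T"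
    by (simp add: openin_open)
  then obtain G where G: "\<And>c. open (G c)" "\<And>c. {y \<in> S. u y < c} = S \<inter> G c"
    by metis
  show thesis
  proof (rule ccontr)
    assume no_max: "\<not> thesis"
    have "S \<subseteq> \<Union> ((G \<circ> u) ` S)"
    proof
      fix y assume "y \<in> S"
      have "\<exists>x\<in>S. u y < u x"
      proof (rule ccontr)
        assume "\<not> (\<exists>x\<in>S. u y < u x)"
        then have "\<And>x. x \<in> S \<Longrightarrow> u x \<le> u y" by (simp add: not_less)
        then show False using no_max that[OF \<open>y \<in> S\<close>] by blast
      qed
      then obtain x where "x \<in> S" "u y < u x" by blast
      then show "y \<in> \<Union> ((G \<circ> u) ` S)" using G(2)[of "u x"] \<open>y \<in> S\<close> by auto
    qed
    then obtain C where C: "C \<subseteq> S" "finite C" "S \<subseteq> \<Union> ((G \<circ> u) ` C)"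
      using compactE_image[OF assms(1), of S "G \<circ> u"] G(1) by (metis comp_apply)
    then have "C \<noteq> {}" using assms(2) by auto
    then have "Max (u ` C) \<in> u ` C" using C(2) by simp
    then obtain x0 where x0: "x0 \<in> C" "u x0 = Max (u ` C)" by auto
    then obtain x where x: "x \<in> C" "x0 \<in> G (u x)" using C by auto
    then have "u x0 < u x" using G(2)[of "u x"] C(1) x0(1) by blast
    moreover have "u x \<le> u x0" using x0(2) C(2) x(1) by simp
    ultimately show False by simp
  qed
qed

lemma eventually_in_imp_less_off_open:
  assumes "open V" "z \<notin> V"
    and "z \<in> frontier V \<Longrightarrow> Limsup (at z within V) (\<lambda>y. ereal (u y)) < ereal c"
  shows "eventually (\<lambda>y. y \<in> V \<longrightarrow> u y < c) (at z)"
proof (cases "z \<in> closure V")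
  case True
  then have "z \<in> frontier V" using assms(1,2) by (simp add: frontier_def interior_open)
  then have "eventually (\<lambda>y. ereal (u y) < ereal c) (at z within V)"
    using assms(3) by (intro Limsup_lessD)
  then show ?thesis unfolding eventually_at_filter by (auto elim: eventually_mono)
next
  case False
  then have "eventually (\<lambda>y. y \<in> - closure V) (nhds z)" by (intro eventually_nhds_in_open) auto
  then show ?thesis
    unfolding eventually_at_filter by (auto elim: eventually_mono dest: subsetD[OF closure_subset])
qed

lemma usc_on_extend_frontier:
  assumes "open U" "usc_on U u"
    and "\<forall>\<zeta>\<in>frontier U. Limsup (at \<zeta> within U) (\<lambda>y. ereal (u y)) \<le> ereal M"
  shows "usc_on (closure U) (\<lambda>y. if y \<in> U then u y else M)"
  unfolding usc_on_def
proof (intro ballI allI impI)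
  fix z c assume z: "z \<in> closure U" and less: "(if z \<in> U then u z else M) < c"
  have "eventually (\<lambda>y. (if y \<in> U then u y else M) < c) (at z)"
  proof (cases "z \<in> U")
    case True
    then have "eventually (\<lambda>y. u y < c) (at z within U)"
      using assms(2) less unfolding usc_on_def by auto
    then have "eventually (\<lambda>y. u y < c) (at z)" using at_within_open[OF True assms(1)] by simp
    then show ?thesis
      using eventually_at_in_open'[OF assms(1) True] by eventually_elim auto
  next
    case False
    have "eventually (\<lambda>y. y \<in> U \<longrightarrow> u y < c) (at z)"
    proof (rule eventually_in_imp_less_off_open[OF assms(1) False])
      assume "z \<in> frontier U"
      then have "Limsup (at z within U) (\<lambda>y. ereal (u y)) \<le> ereal M" using assms(3) by blast
      also have "ereal M < ereal c" using less False by simp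
      finally show "Limsup (at z within U) (\<lambda>y. ereal (u y)) < ereal c" .
    qed
    then show ?thesis by eventually_elim (use less False in auto)
  qed
  then show "eventually (\<lambda>y. (if y \<in> U then u y else M) < c) (at z within closure U)"
    by (rule filter_leD[OF at_le[of "closure U" UNIV], simplified])
qed

lemma usc_on_diff_continuous:
  assumes usc: "usc_on V u" and hc: "continuous_on V h"
  shows "usc_on V (\<lambda>y. u y - h y)"
  unfolding usc_on_def
proof (intro ballI allI impI)
  fix z c assume z: "z \<in> V" and lt: "u z - h z < c"
  define a where "a = c - (u z - h z)"
  have a: "a > 0" using lt by (simp add: a_def)
  have "eventually (\<lambda>y. u y < u z + a/2) (at z within V)"
    using usc z a unfolding usc_on_def by simp
  moreover have "(h \<longlongrightarrow> h z) (at z within V)" using hc z by (simp add: continuous_on_def)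
  then have "eventually (\<lambda>y. h y > h z - a/2) (at z within V)"
    by (rule order_tendstoD(1)) (use a in simp)
  ultimately show "eventually (\<lambda>y. u y - h y < c) (at z within V)"
    by eventually_elim (use a_def in linarith)
qed

lemma Limsup_at_within_subset_le:
  fixes f g :: "'a::topological_space \<Rightarrow> 'b::complete_linorder"
  assumes "V \<subseteq> U" "\<And>y. y \<in> V \<Longrightarrow> g y \<le> f y"
  shows "Limsup (at x within V) g \<le> Limsup (at x within U) f"
proof -
  have "Limsup (at x within V) g \<le> Limsup (at x within V) f"
    by (rule Limsup_mono) (simp add: eventually_at_filter assms(2))
  also have "\<dots> \<le> Limsup (at x within U) f"
    unfolding Limsup_le_iff
    by (blast intro: filter_leD[OF at_le[OF assms(1)]] Limsup_lessD)
  finally show ?thesis .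
qed

section \<open>Subharmonic functions\<close>

lemma subharmonic_onI:
  assumes "open U" "usc_on U u"
    and "\<And>z. z \<in> U \<Longrightarrow> \<exists>r0>0. cball z r0 \<subseteq> U \<and> (\<forall>r. 0 < r \<and> r < r0 \<longrightarrow>
           set_integrable lborel {0..2*pi} (\<lambda>t. u (z + of_real r * cis t)) \<and>
           u z \<le> (1 / (2*pi)) * (LINT t:{0..2*pi}|lborel. u (z + of_real r * cis t)))"
  shows "subharmonic_on U u"
  unfolding subharmonic_on_def by (intro conjI ballI assms)

lemma subharmonic_onD:
  assumes "subharmonic_on U u" "z \<in> U"
  obtains r0 where "r0 > 0" "cball z r0 \<subseteq> U"
    "\<And>r. 0 < r \<Longrightarrow> r < r0 \<Longrightarrow> set_integrable lborel {0..2*pi} (\<lambda>t. u (z + of_real r * cis t))"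
    "\<And>r. 0 < r \<Longrightarrow> r < r0 \<Longrightarrow>
       u z \<le> (1 / (2*pi)) * (LINT t:{0..2*pi}|lborel. u (z + of_real r * cis t))"
  using assms unfolding subharmonic_on_def by blast

lemma subharmonic_on_imp_usc_on: "subharmonic_on U u \<Longrightarrow> usc_on U u"
  by (simp add: subharmonic_on_def)

lemma subharmonic_on_imp_open: "subharmonic_on U u \<Longrightarrow> open U"
  by (simp add: subharmonic_on_def)

lemma sub_mean_value_max_on_circle:
  assumes usc: "usc_on U u" and le: "\<And>y. y \<in> U \<Longrightarrow> u y \<le> u w" and r: "0 < r"
    and circ: "\<And>t. w + of_real r * cis t \<in> U"
    and int: "set_integrable lborel {0..2*pi} (\<lambda>t. u (w + of_real r * cis t))"
    and mean: "u w \<le> (1 / (2*pi)) * (LINT t:{0..2*pi}|lborel. u (w + of_real r * cis t))"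
    and w': "w' \<in> U" "norm (w' - w) = r"
  shows "u w' = u w"
proof (rule ccontr)
  define m where "m = u w"
  assume "u w' \<noteq> u w"
  then have "u w' < m" using le[OF w'(1)] by (simp add: m_def)
  define c where "c = (u w' + m) / 2"
  have c: "u w' < c" "c < m" using \<open>u w' < m\<close> by (auto simp: c_def)
  obtain d where d: "d > 0" "\<And>y. y \<in> U \<Longrightarrow> dist y w' < d \<Longrightarrow> u y < c"
    using usc_onD_dist[OF usc w'(1) c(1)] by blast
  define t0 where "t0 = Arg2pi (w' - w)"
  have t0: "0 \<le> t0" "t0 < 2*pi" using Arg2pi_ge_0 Arg2pi_lt_2pi t0_def by auto
  have wt0: "w + of_real r * cis t0 = w'"
    using Arg2pi_eq[of "w' - w"] w'(2) by (simp add: t0_def cis_conv_exp)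
  have "isCont (\<lambda>s. w + of_real r * cis s) t0" unfolding cis_conv_exp by (intro continuous_intros)
  then obtain e where e: "e > 0"
    "\<forall>s. dist s t0 < e \<longrightarrow> dist (w + of_real r * cis s) (w + of_real r * cis t0) < d"
    using d(1) unfolding continuous_at_eps_delta by blast
  define l where "l = min (e/2) (2*pi - t0)"
  have l: "0 < l" "l < e" "t0 + l \<le> 2*pi" using e t0 by (auto simp: l_def)
  have "u (w + of_real r * cis t) \<le> c" if "t \<in> {t0..t0+l}" for t
  proof -
    have "dist t t0 < e" using that l by (auto simp: dist_real_def)
    then show ?thesis using e(2) d(2) circ wt0 by (simp add: less_imp_le)
  qed
  then have "(LINT t:{0..2*pi}|lborel. u (w + of_real r * cis t)) \<le> (2*pi - 0) * m - (m - c) * l"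
    using le[OF circ] t0 l by (intro set_integral_le_of_le_on_subinterval[OF int]) (auto simp: m_def)
  then have "(1 / (2*pi)) * (LINT t:{0..2*pi}|lborel. u (w + of_real r * cis t)) \<le>
      (1 / (2*pi)) * (2*pi*m - (m - c) * l)"
    by (intro mult_left_mono) auto
  with mean have "m \<le> (1 / (2*pi)) * (2*pi*m - (m - c) * l)"
    unfolding m_def by linarith
  also have "\<dots> < m" using c l by (simp add: field_simps)
  finally show False by simp
qed

lemma subharmonic_on_open_max_set:
  assumes sh: "subharmonic_on U u" and le: "\<And>y. y \<in> U \<Longrightarrow> u y \<le> m"
  shows "open {y \<in> U. u y = m}"
proof (subst open_contains_ball, intro ballI)
  fix w assume "w \<in> {y \<in> U. u y = m}"
  then have w: "w \<in> U" "u w = m" by auto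
  obtain r0 where r0: "r0 > 0" "cball w r0 \<subseteq> U"
    "\<And>r. 0 < r \<Longrightarrow> r < r0 \<Longrightarrow> set_integrable lborel {0..2*pi} (\<lambda>t. u (w + of_real r * cis t))"
    "\<And>r. 0 < r \<Longrightarrow> r < r0 \<Longrightarrow>
       u w \<le> (1 / (2*pi)) * (LINT t:{0..2*pi}|lborel. u (w + of_real r * cis t))"
    using subharmonic_onD[OF sh w(1)] by blast
  have le_w: "u y \<le> u w" if "y \<in> U" for y using le[OF that] w(2) by simp
  have on_ball: "u y = m" if "y \<in> ball w r0" for y
  proof (cases "y = w")
    case False
    define r where "r = norm (y - w)"
    have r: "0 < r" "r < r0" using False that by (auto simp: r_def dist_norm norm_minus_commute)
    have circ: "w + of_real r * cis t \<in> U" for t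
      using r r0(2) by (auto simp: dist_norm norm_mult)
    have "y \<in> U" using that r0(2) by auto
    then show ?thesis
      using sub_mean_value_max_on_circle[OF subharmonic_on_imp_usc_on[OF sh] le_w r(1) circ r0(3,4)[OF r]]
        w(2) by (simp add: r_def)
  qed (use w in simp)
  have "ball w r0 \<subseteq> {y \<in> U. u y = m}" using on_ball r0(2) ball_subset_cball by blast
  then show "\<exists>e>0. ball w e \<subseteq> {y \<in> U. u y = m}" using r0(1) by blast
qed

lemma subharmonic_max_principle:
  assumes U: "open U" "bounded U" and sh: "subharmonic_on U u"
    and bd: "\<forall>\<zeta>\<in>frontier U. Limsup (at \<zeta> within U) (\<lambda>y. ereal (u y)) \<le> ereal M"
    and x: "x \<in> U"
  shows "u x \<le> M"
proof -
  define v where "v = (\<lambda>y. if y \<in> U then u y else M)"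
  have usc_v: "usc_on (closure U) v"
    unfolding v_def by (rule usc_on_extend_frontier[OF U(1) subharmonic_on_imp_usc_on[OF sh] bd])
  obtain x0 where x0: "x0 \<in> closure U" "\<And>y. y \<in> closure U \<Longrightarrow> v y \<le> v x0"
    using usc_on_attains_max[OF _ _ usc_v] U(2) x closure_subset
    by (metis compact_closure empty_iff subsetD)
  define m where "m = v x0"
  have le_m: "u y \<le> m" if "y \<in> U" for y
    using x0(2)[OF subsetD[OF closure_subset that]] that by (simp add: m_def v_def)
  show ?thesis
  proof (rule ccontr)
    assume "\<not> u x \<le> M"
    with le_m[OF x] have "M < m" by linarith
    \<comment> \<open>The set where the maximum is attained is open, so it has a frontier point,
      at which upper semicontinuity of v fails.\<close>
    define A where "A = {y \<in> U. u y = m}"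
    have "x0 \<in> A" using \<open>M < m\<close> x0(1) by (auto simp: A_def m_def v_def split: if_splits)
    moreover have "open A" unfolding A_def using sh le_m by (rule subharmonic_on_open_max_set)
    moreover have "A \<noteq> UNIV"
      using U(2) bounded_subset not_bounded_UNIV by (metis A_def mem_Collect_eq subsetI)
    ultimately obtain \<zeta> where \<zeta>: "\<zeta> \<in> frontier A" using frontier_not_empty by blast
    then have "\<zeta> \<in> closure A" "\<zeta> \<notin> A" using \<open>open A\<close> by (auto simp: frontier_def interior_open)
    have "A \<subseteq> closure U" using closure_subset by (auto simp: A_def)
    then have \<zeta>U: "\<zeta> \<in> closure U" using \<open>\<zeta> \<in> closure A\<close> closure_minimal closed_closure by blast
    have "v \<zeta> < m"
      using x0(2)[OF \<zeta>U] \<open>\<zeta> \<notin> A\<close> \<open>M < m\<close> by (auto simp: A_def m_def v_def split: if_splits)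
    then obtain d where d: "d > 0" "\<And>y. y \<in> closure U \<Longrightarrow> dist y \<zeta> < d \<Longrightarrow> v y < m"
      using usc_onD_dist[OF usc_v \<zeta>U] by blast
    obtain y where "y \<in> A" "dist y \<zeta> < d" using \<open>\<zeta> \<in> closure A\<close> d(1) closure_approachable by blast
    then show False using d(2)[of y] \<open>A \<subseteq> closure U\<close> by (auto simp: A_def v_def)
  qed
qed

lemma subharmonic_on_const:
  assumes "open U" shows "subharmonic_on U (\<lambda>_. c)"
proof (rule subharmonic_onI[OF assms])
  show "usc_on U (\<lambda>_. c)" unfolding usc_on_def by simp
  have int: "set_integrable lborel {0..2*pi} (\<lambda>t. c)"
    by (rule set_integrable_bounded_Icc[where B="\<bar>c\<bar>"]) auto
  have mean: "(LINT t:{0..2*pi}|lborel. c) = 2*pi*c"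
    by (simp add: set_integral_const)
  fix z assume "z \<in> U"
  then obtain r0 where "r0 > 0" "cball z r0 \<subseteq> U" using assms open_contains_cball by blast
  then show "\<exists>r0>0. cball z r0 \<subseteq> U \<and> (\<forall>r. 0 < r \<and> r < r0 \<longrightarrow>
      set_integrable lborel {0..2*pi} (\<lambda>t. c) \<and> c \<le> 1 / (2*pi) * (LINT t:{0..2*pi}|lborel. c))"
    by (intro exI[of _ r0]) (simp add: int mean)
qed

lemma subharmonic_on_subset:
  assumes "subharmonic_on U u" "open V" "V \<subseteq> U"
  shows "subharmonic_on V u"
proof (rule subharmonic_onI[OF assms(2)])
  show "usc_on V u"
    using subharmonic_on_imp_usc_on[OF assms(1)] assms(3) unfolding usc_on_def
    by (meson at_le filter_leD subsetD)
  fix z assume "z \<in> V"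
  obtain r0 where r0: "r0 > 0" "cball z r0 \<subseteq> U"
    "\<And>r. 0 < r \<Longrightarrow> r < r0 \<Longrightarrow> set_integrable lborel {0..2*pi} (\<lambda>t. u (z + of_real r * cis t))"
    "\<And>r. 0 < r \<Longrightarrow> r < r0 \<Longrightarrow>
       u z \<le> (1 / (2*pi)) * (LINT t:{0..2*pi}|lborel. u (z + of_real r * cis t))"
    using subharmonic_onD[OF assms(1)] \<open>z \<in> V\<close> assms(3) by blast
  obtain r1 where "r1 > 0" "cball z r1 \<subseteq> V" using assms(2) \<open>z \<in> V\<close> open_contains_cball by blast
  then show "\<exists>r0>0. cball z r0 \<subseteq> V \<and> (\<forall>r. 0 < r \<and> r < r0 \<longrightarrow>
           set_integrable lborel {0..2*pi} (\<lambda>t. u (z + of_real r * cis t)) \<and>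
           u z \<le> (1 / (2*pi)) * (LINT t:{0..2*pi}|lborel. u (z + of_real r * cis t)))"
    using r0 by (intro exI[of _ "min r0 r1"]) auto
qed

lemma subharmonic_on_diff_harmonic:
  assumes sh: "subharmonic_on V u" and hc: "continuous_on V h"
    and hm: "\<And>x r. x \<in> V \<Longrightarrow> 0 < r \<Longrightarrow> cball x r \<subseteq> V \<Longrightarrow>
               ((\<lambda>t. h (x + of_real r * cis t)) has_integral 2*pi * h x) {0..2*pi}"
  shows "subharmonic_on V (\<lambda>y. u y - h y)"
proof (rule subharmonic_onI)
  show "open V" using subharmonic_on_imp_open[OF sh] .
  show "usc_on V (\<lambda>y. u y - h y)"
    using subharmonic_on_imp_usc_on[OF sh] hc by (rule usc_on_diff_continuous)
next
  fix z assume z: "z \<in> V"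
  obtain r0 where r0: "r0 > 0" "cball z r0 \<subseteq> V"
    "\<And>r. 0 < r \<Longrightarrow> r < r0 \<Longrightarrow> set_integrable lborel {0..2*pi} (\<lambda>t. u (z + of_real r * cis t))"
    "\<And>r. 0 < r \<Longrightarrow> r < r0 \<Longrightarrow>
       u z \<le> (1 / (2*pi)) * (LINT t:{0..2*pi}|lborel. u (z + of_real r * cis t))"
    using subharmonic_onD[OF sh z] by blast
  have "set_integrable lborel {0..2*pi} (\<lambda>t. u (z + of_real r * cis t) - h (z + of_real r * cis t)) \<and>
        u z - h z \<le> (1 / (2*pi)) *
          (LINT t:{0..2*pi}|lborel. u (z + of_real r * cis t) - h (z + of_real r * cis t))"
    if r: "0 < r" "r < r0" for r
  proof -
    have cb: "cball z r \<subseteq> V" using r r0(2) by auto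
    then have circ: "z + of_real r * cis t \<in> V" for t using r by (auto simp: dist_norm norm_mult)
    have "continuous_on {0..2*pi} (\<lambda>t. h (z + of_real r * cis t))"
      unfolding cis_conv_exp
      by (rule continuous_on_compose2[OF hc])
         (use circ in \<open>auto simp: cis_conv_exp intro!: continuous_intros\<close>)
    from set_integral_Icc_eq_has_integral[OF this hm[OF z r(1) cb]]
    have h_int: "set_integrable lborel {0..2*pi} (\<lambda>t. h (z + of_real r * cis t))"
      and h_mean: "(LINT t:{0..2*pi}|lborel. h (z + of_real r * cis t)) = 2*pi * h z" .
    have "(LINT t:{0..2*pi}|lborel. u (z + of_real r * cis t) - h (z + of_real r * cis t)) =
          (LINT t:{0..2*pi}|lborel. u (z + of_real r * cis t)) - 2*pi * h z"
      using set_integral_diff(2)[OF r0(3)[OF r] h_int] h_mean by simp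
    then show ?thesis
      using set_integral_diff(1)[OF r0(3)[OF r] h_int] r0(4)[OF r] by (simp add: field_simps)
  qed
  then show "\<exists>r0>0. cball z r0 \<subseteq> V \<and> (\<forall>r. 0 < r \<and> r < r0 \<longrightarrow>
           set_integrable lborel {0..2*pi} (\<lambda>t. u (z + of_real r * cis t) - h (z + of_real r * cis t)) \<and>
           u z - h z \<le> (1 / (2*pi)) *
             (LINT t:{0..2*pi}|lborel. u (z + of_real r * cis t) - h (z + of_real r * cis t)))"
    using r0(1,2) by blast
qed

section \<open>Perron solutions\<close>

lemma const_in_perron_family:
  assumes "open U" "\<forall>\<zeta>\<in>frontier U. c \<le> f \<zeta>"
  shows "(\<lambda>_. c) \<in> perron_family U f"
  unfolding perron_family_def
proof (intro CollectI conjI subharmonic_on_const assms(1) ballI)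
  fix \<zeta> assume "\<zeta> \<in> frontier U"
  show "Limsup (at \<zeta> within U) (\<lambda>z. ereal c) \<le> ereal (f \<zeta>)"
    unfolding Limsup_le_iff
  proof (intro allI impI always_eventually)
    fix y :: ereal assume "ereal (f \<zeta>) < y"
    have "ereal c \<le> ereal (f \<zeta>)" using assms(2) \<open>\<zeta> \<in> frontier U\<close> by simp
    then show "ereal c < y" using \<open>ereal (f \<zeta>) < y\<close> by (rule le_less_trans)
  qed
qed

lemma perron_family_le:
  assumes "open U" "bounded U" "\<forall>\<zeta>\<in>frontier U. f \<zeta> \<le> c" "u \<in> perron_family U f" "x \<in> U"
  shows "u x \<le> c"
proof (rule subharmonic_max_principle[OF assms(1,2) _ _ assms(5)])
  show "subharmonic_on U u" using assms(4) by (simp add: perron_family_def)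
  show "\<forall>\<zeta>\<in>frontier U. Limsup (at \<zeta> within U) (\<lambda>z. ereal (u z)) \<le> ereal c"
    using assms(3,4) unfolding perron_family_def by (auto intro: order_trans)
qed

lemma perron_eq_SUP:
  assumes "open U" "bounded U" "\<forall>\<zeta>\<in>frontier U. 0 \<le> f \<zeta> \<and> f \<zeta> \<le> 1" "x \<in> U"
  shows "ereal (perron U f x) = (SUP u\<in>perron_family U f. ereal (u x))"
proof -
  let ?S = "SUP u\<in>perron_family U f. ereal (u x)"
  have "ereal 0 \<le> ?S"
    using const_in_perron_family[OF assms(1), of 0 f] assms(3) by (auto intro: SUP_upper2)
  moreover have "?S \<le> ereal 1"
    using perron_family_le[OF assms(1,2), of f 1] assms(3,4) by (auto intro!: SUP_least)
  ultimately have "\<bar>?S\<bar> \<noteq> \<infinity>" by auto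
  then show ?thesis unfolding perron_def by (rule ereal_real')
qed

lemma perron_ge:
  assumes "open U" "bounded U" "\<forall>\<zeta>\<in>frontier U. 0 \<le> f \<zeta> \<and> f \<zeta> \<le> 1" "x \<in> U"
    and "u \<in> perron_family U f"
  shows "u x \<le> perron U f x"
proof -
  have "ereal (u x) \<le> ereal (perron U f x)"
    unfolding perron_eq_SUP[OF assms(1-4)] using assms(5) by (rule SUP_upper)
  then show ?thesis by simp
qed

lemma perron_approx:
  assumes "open U" "bounded U" "\<forall>\<zeta>\<in>frontier U. 0 \<le> f \<zeta> \<and> f \<zeta> \<le> 1" "x \<in> U" "e > 0"
  obtains u where "u \<in> perron_family U f" "perron U f x - e < u x"
proof -
  have "ereal (perron U f x - e) < ereal (perron U f x)" using assms(5) by simp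
  then show thesis
    unfolding perron_eq_SUP[OF assms(1-4)] less_SUP_iff using that by auto
qed

definition zero_ext_pos :: "complex set \<Rightarrow> (complex \<Rightarrow> real) \<Rightarrow> complex \<Rightarrow> real" where
  "zero_ext_pos V u y = (if y \<in> V then max (u y) 0 else 0)"

lemma usc_on_zero_ext_pos:
  assumes V: "open V" "V \<subseteq> U" and usc: "usc_on V u"
    and bd: "\<forall>\<zeta>\<in>frontier V \<inter> U. Limsup (at \<zeta> within V) (\<lambda>y. ereal (u y)) \<le> 0"
  shows "usc_on U (zero_ext_pos V u)"
  unfolding usc_on_def
proof (intro ballI allI impI)
  fix z c assume z: "z \<in> U" and less: "zero_ext_pos V u z < c"
  then have "0 < c" by (auto simp: zero_ext_pos_def split: if_splits)
  have "eventually (\<lambda>y. zero_ext_pos V u y < c) (at z)"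
  proof (cases "z \<in> V")
    case True
    then have "eventually (\<lambda>y. u y < c) (at z within V)"
      using usc less unfolding usc_on_def zero_ext_pos_def by auto
    then have "eventually (\<lambda>y. u y < c) (at z)" using at_within_open[OF True V(1)] by simp
    then show ?thesis
      using eventually_at_in_open'[OF V(1) True]
      by eventually_elim (use \<open>0 < c\<close> in \<open>simp add: zero_ext_pos_def\<close>)
  next
    case False
    have "eventually (\<lambda>y. y \<in> V \<longrightarrow> u y < c) (at z)"
    proof (rule eventually_in_imp_less_off_open[OF V(1) False])
      assume "z \<in> frontier V"
      then have "Limsup (at z within V) (\<lambda>y. ereal (u y)) \<le> 0" using bd z by blast
      also have "0 < ereal c" using \<open>0 < c\<close> by simp
      finally show "Limsup (at z within V) (\<lambda>y. ereal (u y)) < ereal c" .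
    qed
    then show ?thesis by eventually_elim (use \<open>0 < c\<close> in \<open>simp add: zero_ext_pos_def\<close>)
  qed
  then show "eventually (\<lambda>y. zero_ext_pos V u y < c) (at z within U)"
    by (rule filter_leD[OF at_le[of U UNIV], simplified])
qed

lemma subharmonic_on_zero_ext_pos:
  assumes V: "open V" "V \<subseteq> U" and U: "open U"
    and sh: "subharmonic_on V u" and ub: "\<And>y. y \<in> V \<Longrightarrow> u y \<le> B"
    and bd: "\<forall>\<zeta>\<in>frontier V \<inter> U. Limsup (at \<zeta> within V) (\<lambda>y. ereal (u y)) \<le> 0"
  shows "subharmonic_on U (zero_ext_pos V u)"
proof -
  let ?w = "zero_ext_pos V u"
  have usc_w: "usc_on U ?w"
    using usc_on_zero_ext_pos[OF V subharmonic_on_imp_usc_on[OF sh] bd] .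
  have "0 \<le> ?w y" "?w y \<le> max B 0" for y
    using ub[of y] by (auto simp: zero_ext_pos_def)
  note circle_mean = usc_on_circle_mean_nonneg[OF usc_w this]
  have "\<exists>r0>0. cball z r0 \<subseteq> U \<and> (\<forall>r. 0 < r \<and> r < r0 \<longrightarrow>
           set_integrable lborel {0..2*pi} (\<lambda>t. ?w (z + of_real r * cis t)) \<and>
           ?w z \<le> (1 / (2*pi)) * (LINT t:{0..2*pi}|lborel. ?w (z + of_real r * cis t)))"
    if z: "z \<in> U" for z
  proof (cases "z \<in> V")
    case True
    obtain r0 where r0: "r0 > 0" "cball z r0 \<subseteq> V"
      "\<And>r. 0 < r \<Longrightarrow> r < r0 \<Longrightarrow> set_integrable lborel {0..2*pi} (\<lambda>t. u (z + of_real r * cis t))"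
      "\<And>r. 0 < r \<Longrightarrow> r < r0 \<Longrightarrow>
         u z \<le> (1 / (2*pi)) * (LINT t:{0..2*pi}|lborel. u (z + of_real r * cis t))"
      using subharmonic_onD[OF sh True] by blast
    have "?w z \<le> (1 / (2*pi)) * (LINT t:{0..2*pi}|lborel. ?w (z + of_real r * cis t))"
      if r: "0 < r" "r < r0" for r
    proof -
      have cb: "cball z r \<subseteq> V" using r r0(2) by auto
      then have circ: "z + of_real r * cis t \<in> V" for t using r by (auto simp: dist_norm norm_mult)
      have w_int: "set_integrable lborel {0..2*pi} (\<lambda>t. ?w (z + of_real r * cis t))"
        using circle_mean(1)[OF r(1)] cb V(2) by blast
      have "u z \<le> (1 / (2*pi)) * (LINT t:{0..2*pi}|lborel. u (z + of_real r * cis t))"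
        using r0(4)[OF r] .
      also have "\<dots> \<le> (1 / (2*pi)) * (LINT t:{0..2*pi}|lborel. ?w (z + of_real r * cis t))"
        using circ by (intro mult_left_mono set_integral_mono[OF r0(3)[OF r] w_int])
          (auto simp: zero_ext_pos_def)
      finally show ?thesis using circle_mean(2)[OF r(1)] cb V(2) True by (auto simp: zero_ext_pos_def)
    qed
    moreover have "cball z r0 \<subseteq> U" using r0(2) V(2) by blast
    ultimately show ?thesis using r0(1) circle_mean(1) by (meson order_trans subset_cball less_imp_le)
  next
    case False
    obtain r0 where r0: "r0 > 0" "cball z r0 \<subseteq> U" using U z open_contains_cball by blast
    have "cball z r \<subseteq> U" if "r < r0" for r using r0(2) that by auto
    then show ?thesis
      using r0 circle_mean False by (intro exI[of _ r0]) (simp add: zero_ext_pos_def)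
  qed
  then show ?thesis by (rule subharmonic_onI[OF U usc_w])
qed

lemma zero_ext_pos_in_perron_family:
  assumes V: "open V" "bounded V" "V \<subseteq> U" and U: "open U"
    and f_nonneg: "\<forall>\<zeta>\<in>frontier U. 0 \<le> f \<zeta>" and f_le: "\<forall>\<zeta>\<in>frontier V. f \<zeta> \<le> 1"
    and f_zero: "\<forall>\<zeta>\<in>frontier V \<inter> U. f \<zeta> = 0"
    and u: "u \<in> perron_family V f"
  shows "zero_ext_pos V u \<in> perron_family U f"
proof -
  have sh: "subharmonic_on V u"
    and bd: "\<forall>\<zeta>\<in>frontier V. Limsup (at \<zeta> within V) (\<lambda>y. ereal (u y)) \<le> ereal (f \<zeta>)"
    using u by (auto simp: perron_family_def)
  have "subharmonic_on U (zero_ext_pos V u)"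
    using bd f_zero perron_family_le[OF V(1,2) f_le u]
    by (intro subharmonic_on_zero_ext_pos[OF V(1,3) U sh, of 1]) (auto simp: zero_ereal_def)
  moreover have "Limsup (at \<zeta> within U) (\<lambda>y. ereal (zero_ext_pos V u y)) \<le> ereal (f \<zeta>)"
    if \<zeta>: "\<zeta> \<in> frontier U" for \<zeta>
    unfolding Limsup_le_iff
  proof (intro allI impI)
    fix y :: ereal assume y: "ereal (f \<zeta>) < y"
    show "eventually (\<lambda>x. ereal (zero_ext_pos V u x) < y) (at \<zeta> within U)"
    proof (cases y)
      case (real c)
      have "0 < c" using y f_nonneg \<zeta> real by force
      have "\<zeta> \<notin> V" using \<zeta> V(3) U by (auto simp: frontier_def interior_open)
      have "eventually (\<lambda>x. x \<in> V \<longrightarrow> u x < c) (at \<zeta>)"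
      proof (rule eventually_in_imp_less_off_open[OF V(1) \<open>\<zeta> \<notin> V\<close>])
        assume "\<zeta> \<in> frontier V"
        then have "Limsup (at \<zeta> within V) (\<lambda>y. ereal (u y)) \<le> ereal (f \<zeta>)" using bd by blast
        also have "\<dots> < ereal c" using y real by simp
        finally show "Limsup (at \<zeta> within V) (\<lambda>y. ereal (u y)) < ereal c" .
      qed
      then have "eventually (\<lambda>x. zero_ext_pos V u x < c) (at \<zeta>)"
        by eventually_elim (use \<open>0 < c\<close> in \<open>simp add: zero_ext_pos_def\<close>)
      then show ?thesis using real by (auto intro: filter_leD[OF at_le[of U UNIV], simplified])
    qed (use y in auto)
  qed
  ultimately show ?thesis unfolding perron_family_def by blast
qed

lemma perron_domain_mono:
  assumes V: "open V" "bounded V" "V \<subseteq> U" and U: "open U" "bounded U" and z: "z \<in> V"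
    and f_bounds: "\<And>\<zeta>. 0 \<le> f \<zeta> \<and> f \<zeta> \<le> 1" and f_zero: "\<forall>\<zeta>\<in>frontier V \<inter> U. f \<zeta> = 0"
  shows "perron V f z \<le> perron U f z"
proof (rule field_le_epsilon)
  fix e :: real assume "e > 0"
  then obtain u where u: "u \<in> perron_family V f" "perron V f z - e < u z"
    using perron_approx[OF V(1,2) _ z] f_bounds by blast
  have "u z \<le> zero_ext_pos V u z" using z by (simp add: zero_ext_pos_def)
  also have "\<dots> \<le> perron U f z"
    using zero_ext_pos_in_perron_family[OF V U(1) _ _ f_zero u(1)] f_bounds z V(3)
    by (intro perron_ge[OF U]) auto
  finally show "perron V f z \<le> perron U f z + e" using u(2) by simp
qed

lemma perron_family_diff_harmonic:
  assumes U: "open U" "bounded U" and V: "open V" "V \<subseteq> U"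
    and u: "u \<in> perron_family U f" and f_le: "\<forall>\<zeta>\<in>frontier U. f \<zeta> \<le> 1"
    and f_nonneg: "\<forall>\<zeta>\<in>frontier V \<inter> U. 0 \<le> f \<zeta>"
    and hc: "continuous_on V h"
    and hm: "\<And>x r. x \<in> V \<Longrightarrow> 0 < r \<Longrightarrow> cball x r \<subseteq> V \<Longrightarrow>
               ((\<lambda>t. h (x + of_real r * cis t)) has_integral 2*pi * h x) {0..2*pi}"
    and h_nonneg: "\<And>y. y \<in> V \<Longrightarrow> 0 \<le> h y"
    and h_big: "\<And>\<zeta>. \<zeta> \<in> frontier V \<inter> U \<Longrightarrow> eventually (\<lambda>y. 1 < h y) (at \<zeta> within V)"
  shows "(\<lambda>y. u y - h y) \<in> perron_family V f"
proof -
  have sh: "subharmonic_on U u"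
    and bd: "\<forall>\<zeta>\<in>frontier U. Limsup (at \<zeta> within U) (\<lambda>y. ereal (u y)) \<le> ereal (f \<zeta>)"
    using u by (auto simp: perron_family_def)
  have "subharmonic_on V (\<lambda>y. u y - h y)"
    using subharmonic_on_subset[OF sh V] hc hm by (rule subharmonic_on_diff_harmonic)
  moreover have "Limsup (at \<zeta> within V) (\<lambda>y. ereal (u y - h y)) \<le> ereal (f \<zeta>)"
    if \<zeta>: "\<zeta> \<in> frontier V" for \<zeta>
  proof (cases "\<zeta> \<in> U")
    case False
    have "\<zeta> \<in> closure U" using \<zeta> closure_mono[OF V(2)] by (auto simp: frontier_def)
    then have "\<zeta> \<in> frontier U" using False U(1) by (simp add: frontier_def interior_open)
    have "Limsup (at \<zeta> within V) (\<lambda>y. ereal (u y - h y)) \<le> Limsup (at \<zeta> within U) (\<lambda>y. ereal (u y))"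
      using V(2) h_nonneg by (intro Limsup_at_within_subset_le) auto
    also have "\<dots> \<le> ereal (f \<zeta>)" using bd \<open>\<zeta> \<in> frontier U\<close> by blast
    finally show ?thesis .
  next
    case True
    have "eventually (\<lambda>y. y \<in> V) (at \<zeta> within V)" by (simp add: eventually_at_filter)
    moreover have "eventually (\<lambda>y. 1 < h y) (at \<zeta> within V)" using h_big \<zeta> True by blast
    ultimately have "eventually (\<lambda>y. ereal (u y - h y) \<le> 0) (at \<zeta> within V)"
      by eventually_elim (use perron_family_le[OF U f_le u] V(2) in force)
    then have "Limsup (at \<zeta> within V) (\<lambda>y. ereal (u y - h y)) \<le> 0" by (rule Limsup_bounded)
    also have "\<dots> \<le> ereal (f \<zeta>)" using f_nonneg \<zeta> True by simp
    finally show ?thesis .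
  qed
  ultimately show ?thesis unfolding perron_family_def by blast
qed

section \<open>Logarithmic potentials\<close>

lemma holomorphic_circle_mean:
  assumes "g holomorphic_on cball a r" "0 < r"
  shows "((\<lambda>t. g (a + of_real r * cis t)) has_integral 2 * of_real pi * g a) {0..2*pi}"
proof -
  have "((\<lambda>u. g u / (u - a)) has_contour_integral (2 * of_real pi * \<i> * g a)) (circlepath a r)"
    by (rule Cauchy_integral_circlepath_simple[OF assms(1)]) (use assms(2) in simp)
  then have "((\<lambda>t. g (a + r * cis t) / (a + r * cis t - a) * r * \<i> * cis t)
      has_integral 2 * of_real pi * \<i> * g a) {0..2*pi}"
    unfolding circlepath_def by (subst (asm) has_contour_integral_part_circlepath_iff) auto
  moreover have "g (a + r * cis t) / (a + r * cis t - a) * r * \<i> * cis t = \<i> * g (a + r * cis t)" for t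
    using assms(2) by (simp add: field_simps cis_neq_zero)
  ultimately have "((\<lambda>t. \<i> * g (a + r * cis t)) has_integral 2 * of_real pi * \<i> * g a) {0..2*pi}"
    by (metis (no_types, lifting) has_integral_cong)
  from has_integral_mult_right[OF this, of "- \<i>"] show ?thesis
    by (simp add: algebra_simps)
qed

lemma has_integral_ln_norm_circle:
  fixes a :: complex
  assumes r: "0 < r" "r < norm a"
  shows "((\<lambda>t. ln (norm (a + of_real r * cis t))) has_integral 2*pi * ln (norm a)) {0..2*pi}"
proof -
  have a0: "a \<noteq> 0" using r by auto
  have nz: "a + of_real r * cis t \<noteq> 0" for t
  proof
    assume "a + of_real r * cis t = 0"
    then have "norm a = norm (of_real r * cis t)" by (metis add_eq_0_iff norm_minus_cancel)
    then show False using r by (simp add: norm_mult)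
  qed
  have Re_pos: "Re (\<xi> / a) > 0" if "\<xi> \<in> cball a r" for \<xi>
  proof -
    have "norm (\<xi> / a - 1) = norm (\<xi> - a) / norm a" using a0
      by (metis (no_types, lifting) diff_divide_distrib divide_self norm_divide)
    also have "\<dots> \<le> r / norm a" using that a0
      by (simp add: dist_norm norm_minus_commute divide_right_mono)
    also have "\<dots> < 1" using r by (simp add: divide_less_eq)
    finally have "\<bar>Re (\<xi> / a - 1)\<bar> < 1" using abs_Re_le_cmod le_less_trans by blast
    then show ?thesis by simp
  qed
  \<comment> \<open>The real part of Ln (\<xi> / a) is ln |\<xi>| - ln |a|.\<close>
  have "(\<lambda>\<xi>. Ln (\<xi> / a)) holomorphic_on cball a r"
    by (intro holomorphic_on_Ln' holomorphic_intros)
       (use Re_pos a0 in \<open>fastforce simp: complex_nonpos_Reals_iff\<close>)+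
  from has_integral_Re[OF holomorphic_circle_mean[OF this r(1)]]
  have "((\<lambda>t. ln (norm (a + of_real r * cis t)) - ln (norm a)) has_integral 0) {0..2*pi}"
    using nz a0 by (simp add: norm_divide ln_div)
  from has_integral_add[OF this has_integral_const_real[of "ln (norm a)" 0 "2*pi"]]
  show ?thesis by simp
qed

definition log_potential :: "complex set \<Rightarrow> real \<Rightarrow> complex \<Rightarrow> real" where
  "log_potential P D w = (\<Sum>p\<in>P. ln (D / norm (w - p)))"

lemma log_potential_circle_mean:
  assumes "finite P" "D > 0" "0 < r" "cball x r \<inter> P = {}"
  shows "((\<lambda>t. log_potential P D (x + of_real r * cis t)) has_integral 2*pi * log_potential P D x) {0..2*pi}"
proof -
  have "((\<lambda>t. ln (D / norm (x + of_real r * cis t - p))) has_integral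
      2*pi * ln (D / norm (x - p))) {0..2*pi}"
    if p: "p \<in> P" for p
  proof -
    have "r < norm (x - p)" using p assms(4) by (force simp: dist_norm)
    then have ln_int: "((\<lambda>t. ln (norm (x + of_real r * cis t - p))) has_integral
        2*pi * ln (norm (x - p))) {0..2*pi}"
      using has_integral_ln_norm_circle[OF assms(3), of "x - p"] by (simp add: algebra_simps)
    have "norm (x + of_real r * cis t - p) \<noteq> 0" for t
    proof -
      have "norm (x - p) \<le> norm (x + of_real r * cis t - p) + norm (of_real r * cis t)"
        using norm_triangle_ineq4[of "x + of_real r * cis t - p" "of_real r * cis t"] by simp
      moreover have "norm (of_real r * cis t) = r" using assms(3) by (simp add: norm_mult)
      ultimately show ?thesis using \<open>r < norm (x - p)\<close> by linarith
    qed
    then have "(\<lambda>t. ln (D / norm (x + of_real r * cis t - p))) =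
        (\<lambda>t. ln D - ln (norm (x + of_real r * cis t - p)))"
      using assms(2) by (simp add: ln_div)
    moreover have "2*pi * ln (D / norm (x - p)) = 2*pi * ln D - 2*pi * ln (norm (x - p))"
      using assms(2) \<open>r < norm (x - p)\<close> assms(3) ln_div[of D "norm (x - p)"]
      by (auto simp: algebra_simps)
    ultimately show ?thesis
      using has_integral_diff[OF has_integral_const_real[of "ln D" 0 "2*pi"] ln_int] by simp
  qed
  then show ?thesis
    unfolding log_potential_def sum_distrib_left by (rule has_integral_sum[OF assms(1)])
qed

lemma continuous_on_log_potential:
  assumes "D > 0" "S \<inter> P = {}"
  shows "continuous_on S (log_potential P D)"
  unfolding log_potential_def
  by (intro continuous_intros) (use assms in auto)

lemma log_potential_nonneg:
  assumes "w \<notin> P" "\<And>p. p \<in> P \<Longrightarrow> norm (w - p) \<le> D"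
  shows "0 \<le> log_potential P D w"
  unfolding log_potential_def
proof (rule sum_nonneg)
  fix p assume "p \<in> P"
  then have "0 < norm (w - p)" "norm (w - p) \<le> D" using assms by auto
  then show "0 \<le> ln (D / norm (w - p))" by simp
qed

lemma log_potential_gt:
  assumes "finite P" "p \<in> P" "w \<notin> P" "\<And>q. q \<in> P \<Longrightarrow> norm (w - q) \<le> D"
    and near: "norm (w - p) < D * exp (- L)"
  shows "L < log_potential P D w"
proof -
  have "0 < norm (w - p)" using assms(2,3) by auto
  then have "D * exp (- L) > 0" using near by linarith
  then have "D > 0" by (simp add: zero_less_mult_iff)
  have "exp L < D / norm (w - p)"
    using near \<open>0 < norm (w - p)\<close> \<open>D > 0\<close> by (simp add: exp_minus field_simps)
  then have "L < ln (D / norm (w - p))"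
    using ln_less_cancel_iff[of "exp L" "D / norm (w - p)"] \<open>0 < norm (w - p)\<close> \<open>D > 0\<close> by simp
  also have "\<dots> \<le> log_potential P D w"
    unfolding log_potential_def
  proof (rule member_le_sum[OF assms(2) _ assms(1)])
    fix q assume "q \<in> P - {p}"
    then have "0 < norm (w - q)" "norm (w - q) \<le> D" using assms(3,4) by auto
    then show "0 \<le> ln (D / norm (w - q))" by simp
  qed
  finally show ?thesis .
qed

lemma eventually_log_potential_gt:
  assumes P: "finite P" "p \<in> P" and near: "norm (\<zeta> - p) < D * exp (- L)"
    and S: "S \<inter> P = {}" "\<And>w q. w \<in> S \<Longrightarrow> q \<in> P \<Longrightarrow> norm (w - q) \<le> D"
  shows "eventually (\<lambda>y. y \<in> S \<longrightarrow> L < log_potential P D y) (at \<zeta>)"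
proof -
  have "eventually (\<lambda>y. y \<in> ball p (D * exp (- L))) (at \<zeta>)"
    using near by (intro eventually_at_in_open') (auto simp: dist_norm norm_minus_commute)
  then show ?thesis
  proof eventually_elim
    case (elim y)
    then have "norm (y - p) < D * exp (- L)" by (simp add: dist_norm norm_minus_commute)
    then show ?case using log_potential_gt[OF P] S by blast
  qed
qed

lemma perron_ge_minus_log_potential:
  assumes U: "open U" "bounded U" and V: "open V" "V \<subseteq> U" "z \<in> V"
    and P: "finite P" "V \<inter> P = {}"
    and D: "D > 0" "\<And>w p. w \<in> U \<Longrightarrow> p \<in> P \<Longrightarrow> norm (w - p) \<le> D" and L: "L > 0"
    and holes: "frontier V \<inter> U \<subseteq> (\<Union>p\<in>P. ball p (D * exp (- L)))"
    and f_bounds: "\<And>\<zeta>. 0 \<le> f \<zeta> \<and> f \<zeta> \<le> 1"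
    and u: "u \<in> perron_family U f"
  shows "u z - log_potential P D z / L \<le> perron V f z"
proof -
  define h where "h = (\<lambda>w. log_potential P D w / L)"
  have "(\<lambda>y. u y - h y) \<in> perron_family V f"
  proof (rule perron_family_diff_harmonic[OF U V(1,2) u])
    show "\<forall>\<zeta>\<in>frontier U. f \<zeta> \<le> 1" "\<forall>\<zeta>\<in>frontier V \<inter> U. 0 \<le> f \<zeta>" using f_bounds by auto
    show "continuous_on V h"
      unfolding h_def using L by (intro continuous_on_divide continuous_on_log_potential D(1) P(2)) auto
    show "((\<lambda>t. h (x + of_real r * cis t)) has_integral 2*pi * h x) {0..2*pi}"
      if "x \<in> V" "0 < r" "cball x r \<subseteq> V" for x r
    proof -
      have "cball x r \<inter> P = {}" using that(3) P(2) by blast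
      from has_integral_divide[OF log_potential_circle_mean[OF P(1) D(1) that(2) this], of L]
      show ?thesis by (simp add: h_def)
    qed
    show "0 \<le> h y" if "y \<in> V" for y
    proof -
      have "0 \<le> log_potential P D y" using log_potential_nonneg[of y P D] that V(2) P(2) D(2) by blast
      then show ?thesis using L by (simp add: h_def)
    qed
    show "eventually (\<lambda>y. 1 < h y) (at \<zeta> within V)" if \<zeta>: "\<zeta> \<in> frontier V \<inter> U" for \<zeta>
    proof -
      obtain p where p: "p \<in> P" "norm (\<zeta> - p) < D * exp (- L)"
        using holes \<zeta> by (auto simp: dist_norm norm_minus_commute)
      have "eventually (\<lambda>y. y \<in> V \<longrightarrow> L < log_potential P D y) (at \<zeta>)"
        using V(2) D(2) by (intro eventually_log_potential_gt[OF P(1) p P(2)]) auto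
      then show ?thesis
        unfolding eventually_at_filter by eventually_elim (use L in \<open>auto simp: h_def\<close>)
    qed
  qed
  then have "u z - h z \<le> perron V f z"
    using bounded_subset[OF U(2) V(2)] f_bounds by (intro perron_ge[OF V(1) _ _ V(3)]) auto
  then show ?thesis by (simp add: h_def)
qed

lemma eventually_gt_perron_shrinking_holes:
  assumes U: "open U" "bounded U" and P: "finite P" and z: "z \<in> U" "z \<notin> P"
    and V: "\<forall>\<^sub>F i in F. open (V i) \<and> V i \<subseteq> U \<and> z \<in> V i \<and> V i \<inter> P = {}"
    and shrink: "\<And>W. open W \<Longrightarrow> P \<subseteq> W \<Longrightarrow> \<forall>\<^sub>F i in F. frontier (V i) \<inter> U \<subseteq> W"
    and f_bounds: "\<And>\<zeta>. 0 \<le> f \<zeta> \<and> f \<zeta> \<le> 1" and a: "a < perron U f z"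
  shows "\<forall>\<^sub>F i in F. a < perron (V i) f z"
proof -
  obtain B where B: "B > 0" "\<And>x. x \<in> U \<union> P \<Longrightarrow> norm x \<le> B"
    using U(2) P bounded_pos[of "U \<union> P"] by (meson bounded_Un finite_imp_bounded)
  define D where "D = 2 * B"
  have D: "D > 0" "\<And>w p. w \<in> U \<Longrightarrow> p \<in> P \<Longrightarrow> norm (w - p) \<le> D"
  proof -
    show "D > 0" using B(1) by (simp add: D_def)
    fix w p assume "w \<in> U" "p \<in> P"
    then have "norm w + norm p \<le> D" using B(2)[of w] B(2)[of p] by (simp add: D_def)
    then show "norm (w - p) \<le> D" using norm_triangle_ineq4[of w p] by linarith
  qed
  define e where "e = perron U f z - a"
  have "e > 0" using a by (simp add: e_def)
  then obtain u where u: "u \<in> perron_family U f" "perron U f z - e/2 < u z"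
    using perron_approx[OF U _ z(1), of f "e/2"] f_bounds by auto
  have "0 \<le> log_potential P D z" using log_potential_nonneg[OF z(2)] D(2) z(1) by blast
  define L where "L = 2 * log_potential P D z / e + 1"
  have L: "L > 0" "log_potential P D z / L < e/2"
    using \<open>0 \<le> log_potential P D z\<close> \<open>e > 0\<close> by (auto simp: L_def field_simps)
  have "\<forall>\<^sub>F i in F. frontier (V i) \<inter> U \<subseteq> (\<Union>p\<in>P. ball p (D * exp (- L)))"
    using D(1) by (intro shrink) auto
  with V show ?thesis
  proof eventually_elim
    case (elim i)
    then have "u z - log_potential P D z / L \<le> perron (V i) f z"
      using perron_ge_minus_log_potential[OF U _ _ _ P _ D L(1) _ f_bounds u(1)] by blast
    with u(2) L(2) show ?case unfolding e_def by argo
  qed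
qed

lemma perron_tendsto_shrinking_holes:
  assumes U: "open U" "bounded U" and P: "finite P"
    and V: "\<forall>\<^sub>F i in F. open (V i) \<and> V i \<subseteq> U \<and> z \<in> V i \<and> V i \<inter> P = {}"
    and shrink: "\<And>W. open W \<Longrightarrow> P \<subseteq> W \<Longrightarrow> \<forall>\<^sub>F i in F. frontier (V i) \<inter> U \<subseteq> W"
    and f_bounds: "\<And>\<zeta>. 0 \<le> f \<zeta> \<and> f \<zeta> \<le> 1" and f_zero: "\<And>\<zeta>. \<zeta> \<in> U \<Longrightarrow> f \<zeta> = 0"
  shows "((\<lambda>i. perron (V i) f z) \<longlongrightarrow> perron U f z) F"
proof (cases "F = bot")
  case False
  then obtain i where "z \<in> V i" "V i \<subseteq> U" "V i \<inter> P = {}" using eventually_happens'[OF False V] by blast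
  then have z: "z \<in> U" "z \<notin> P" by auto
  show ?thesis
  proof (rule order_tendstoI)
    fix a assume "perron U f z < a"
    show "\<forall>\<^sub>F i in F. perron (V i) f z < a"
      using V
    proof eventually_elim
      case (elim i)
      then have "perron (V i) f z \<le> perron U f z"
        using bounded_subset[OF U(2)] f_bounds f_zero
        by (intro perron_domain_mono[OF _ _ _ U]) auto
      with \<open>perron U f z < a\<close> show ?case by linarith
    qed
  next
    fix a assume "a < perron U f z"
    with U P z V shrink f_bounds show "\<forall>\<^sub>F i in F. a < perron (V i) f z"
      by (rule eventually_gt_perron_shrinking_holes)
  qed
qed simp

section \<open>Removing shrinking compact sets\<close>

lemma decreasing_compact_family_subset_open:
  fixes K :: "'i::linorder \<Rightarrow> 'a::t2_space set"
  assumes "i0 \<in> I" "\<And>i. i \<in> I \<Longrightarrow> compact (K i)"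
    and mono: "\<And>i j. i \<in> I \<Longrightarrow> j \<in> I \<Longrightarrow> i \<le> j \<Longrightarrow> K i \<subseteq> K j"
    and "open W" "(\<Inter>i\<in>I. K i) \<subseteq> W"
  obtains i where "i \<in> I" "K i \<subseteq> W"
proof -
  have "K i0 - W \<subseteq> \<Union> ((\<lambda>i. - K i) ` I)" using assms(5) by blast
  moreover have "compact (K i0 - W)" using assms(1,2,4) by (intro compact_diff) auto
  ultimately obtain C where C: "C \<subseteq> I" "finite C" "K i0 - W \<subseteq> \<Union> ((\<lambda>i. - K i) ` C)"
    using compactE_image[of "K i0 - W" I "\<lambda>i. - K i"] assms(2) compact_imp_closed
    by (metis open_Compl)
  define i where "i = Min (insert i0 C)"
  have i: "i \<in> I" "i \<le> i0" "\<And>j. j \<in> C \<Longrightarrow> i \<le> j"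
    using C assms(1) Min_in[of "insert i0 C"] by (auto simp: i_def)
  have "K i \<subseteq> W"
  proof
    fix x assume "x \<in> K i"
    then have "x \<in> K j" if "j \<in> C" for j using mono[OF i(1) _ i(3)[OF that]] that C(1) by blast
    moreover have "x \<in> K i0" using mono[OF i(1) assms(1) i(2)] \<open>x \<in> K i\<close> by blast
    ultimately show "x \<in> W" using C(3) by blast
  qed
  with i(1) show thesis by (rule that)
qed

lemma eventually_at_right_0_decreasing_compact_subset:
  fixes K :: "real \<Rightarrow> 'a::t2_space set"
  assumes "\<And>\<delta>. \<delta> \<in> {0<..1} \<Longrightarrow> compact (K \<delta>)"
    and mono: "\<And>\<delta> \<delta>'. \<delta> \<in> {0<..1} \<Longrightarrow> \<delta>' \<in> {0<..1} \<Longrightarrow> \<delta> \<le> \<delta>' \<Longrightarrow> K \<delta> \<subseteq> K \<delta>'"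
    and "open W" "(\<Inter>\<delta>\<in>{0<..1}. K \<delta>) \<subseteq> W"
  shows "\<forall>\<^sub>F \<delta> in at_right 0. K \<delta> \<subseteq> W"
proof -
  obtain \<delta>1 where \<delta>1: "\<delta>1 \<in> {0<..1}" "K \<delta>1 \<subseteq> W"
    using decreasing_compact_family_subset_open[of 1 "{0<..1}" K W] assms by auto
  have "K \<delta> \<subseteq> W" if "0 < \<delta>" "\<delta> < \<delta>1" for \<delta>
    using mono[of \<delta> \<delta>1] that \<delta>1 by auto
  then show ?thesis
    unfolding eventually_at_right_field by (intro exI[of _ \<delta>1]) (use \<delta>1 in auto)
qed

lemma frontier_connected_component_Diff_subset:
  fixes S C :: "'a::real_normed_vector set"
  assumes "open S" "closed C"
  shows "frontier (connected_component_set (S - C) z) \<inter> S \<subseteq> C"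
proof
  fix \<zeta> assume \<zeta>: "\<zeta> \<in> frontier (connected_component_set (S - C) z) \<inter> S"
  then have "\<zeta> \<in> frontier (S - C)" using frontier_of_connected_component_subset by blast
  moreover have "open (S - C)" using assms by (rule open_Diff)
  ultimately have "\<zeta> \<notin> S - C" by (simp add: frontier_def interior_open)
  then show "\<zeta> \<in> C" using \<zeta> by blast
qed

lemma perron_tendsto_connected_component_Diff:
  assumes S: "open S" "bounded S" and z: "z \<in> S" "z \<notin> P" and P: "finite P"
    and K: "\<forall>\<^sub>F i in F. closed (K i) \<and> P \<subseteq> K i"
    and shrink: "\<And>W. open W \<Longrightarrow> P \<subseteq> W \<Longrightarrow> \<forall>\<^sub>F i in F. K i \<subseteq> W"
    and f_bounds: "\<And>\<zeta>. 0 \<le> f \<zeta> \<and> f \<zeta> \<le> 1" and f_zero: "\<And>\<zeta>. \<zeta> \<in> S \<Longrightarrow> f \<zeta> = 0"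
  shows "((\<lambda>i. perron (connected_component_set (S - K i) z) f z)
           \<longlongrightarrow> perron (connected_component_set S z) f z) F"
proof (rule perron_tendsto_shrinking_holes)
  show "open (connected_component_set S z)" using S(1) by (rule open_connected_component)
  show "bounded (connected_component_set S z)"
    using S(2) connected_component_subset bounded_subset by blast
  have "P \<subseteq> - {z}" using z(2) by blast
  from K shrink[OF open_Compl[OF closed_singleton] this]
  show "\<forall>\<^sub>F i in F. open (connected_component_set (S - K i) z) \<and>
      connected_component_set (S - K i) z \<subseteq> connected_component_set S z \<and>
      z \<in> connected_component_set (S - K i) z \<and> connected_component_set (S - K i) z \<inter> P = {}"
  proof eventually_elim
    case (elim i)
    then have "open (S - K i)" using S(1) by blast
    then show ?case
      using elim z connected_component_subset[of "S - K i" z]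
      by (auto simp: open_connected_component connected_component_mono)
  qed
  show "\<forall>\<^sub>F i in F. frontier (connected_component_set (S - K i) z) \<inter> connected_component_set S z \<subseteq> W"
    if "open W" "P \<subseteq> W" for W
    using K shrink[OF that]
  proof eventually_elim
    case (elim i)
    then show ?case
      using frontier_connected_component_Diff_subset[OF S(1), of "K i" z]
        connected_component_subset[of S z]
      by blast
  qed
qed (use P f_bounds f_zero connected_component_subset in blast)+

theorem lemma4p1:
  fixes R :: real and K :: "complex set" and Kd :: "real \<Rightarrow> complex set"
  defines "\<Omega> \<equiv> ball 0 R - complex_of_real ` {-R<..-1}"
  assumes "R > 0"
    and "compact K" and "K \<subseteq> \<Omega>"
    and "dirichlet_regular_domain (\<Omega> - K)"
    and "\<And>\<delta>. \<delta> \<in> {0<..1} \<Longrightarrow> compact (Kd \<delta>) \<and> Kd \<delta> \<subseteq> \<Omega> - K"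
    and "\<And>\<delta> \<delta>'. \<delta> \<in> {0<..1} \<Longrightarrow> \<delta>' \<in> {0<..1} \<Longrightarrow> (Kd \<delta> \<subseteq> Kd \<delta>' \<longleftrightarrow> \<delta> \<le> \<delta>')"
    and "finite (\<Inter>\<delta>\<in>{0<..1}. Kd \<delta>)"
  shows "\<forall>z \<in> \<Omega> - (K \<union> (\<Inter>\<delta>\<in>{0<..1}. Kd \<delta>)).
           ((\<lambda>\<delta>. harmonic_measure z (sphere 0 R) (\<Omega> - (K \<union> Kd \<delta>)))
              \<longlongrightarrow> harmonic_measure z (sphere 0 R) (\<Omega> - K)) (at_right 0)"
proof
  fix z assume z: "z \<in> \<Omega> - (K \<union> (\<Inter>\<delta>\<in>{0<..1}. Kd \<delta>))"
  define P where "P = (\<Inter>\<delta>\<in>{0<..1}. Kd \<delta>)"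
  have "open (\<Omega> - K)" using assms(5) by (simp add: dirichlet_regular_domain_def)
  have shrink: "\<forall>\<^sub>F \<delta> in at_right 0. Kd \<delta> \<subseteq> W" if "open W" "P \<subseteq> W" for W
    using assms(6,7) that unfolding P_def
    by (intro eventually_at_right_0_decreasing_compact_subset) auto
  have "\<forall>\<^sub>F \<delta> in at_right (0::real). \<delta> \<in> {0<..1}"
    unfolding eventually_at_right_field by (intro exI[of _ 1]) auto
  then have "\<forall>\<^sub>F \<delta> in at_right 0. closed (Kd \<delta>) \<and> P \<subseteq> Kd \<delta>"
    by eventually_elim (use assms(6) in \<open>auto simp: P_def compact_imp_closed\<close>)
  with z shrink assms(8) \<open>open (\<Omega> - K)\<close>
  have "((\<lambda>\<delta>. perron (connected_component_set (\<Omega> - K - Kd \<delta>) z) (indicator (sphere 0 R)) z)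
          \<longlongrightarrow> perron (connected_component_set (\<Omega> - K) z) (indicator (sphere 0 R)) z) (at_right 0)"
    by (intro perron_tendsto_connected_component_Diff)
       (auto simp: P_def \<Omega>_def indicator_def intro: bounded_subset[OF bounded_ball])
  moreover have "\<Omega> - (K \<union> Kd \<delta>) = \<Omega> - K - Kd \<delta>" for \<delta> by blast
  ultimately show "((\<lambda>\<delta>. harmonic_measure z (sphere 0 R) (\<Omega> - (K \<union> Kd \<delta>)))
              \<longlongrightarrow> harmonic_measure z (sphere 0 R) (\<Omega> - K)) (at_right 0)"
    by (simp add: harmonic_measure_def)
qed

end
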